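(* Let $\|\cdot\|$ be a unitarily invariant norm on $\mathbb{M}_n$. (1) If $\|\cdot\|$ is an $M$-norm, then $\|\cdot\|=\alpha\|\cdot\|_\infty$ for some $\alpha>0$. (2) If $\|\cdot\|$ is an $L$-norm, then $\|\cdot\|=\alpha\|\cdot\|_1$ for some $\alpha>0$.
   Context: $\mathbb{M}_n$ is the algebra of complex $n\times n$ matrices with identity $I$; $\|\cdot\|_\infty$ is the operator norm and $\|A\|_1=\mathrm{Tr}(|A|)$ the trace norm. A norm is unitarily invariant if $\|UAV\|=\|A\|$ for all $A$ and all unitaries $U,V$. A norm $\|\cdot\|$ on $\mathbb{M}_n$ is an $M$-norm if $\left\|\sum_{i=1}^k C_i^*X_iC_i\right\|\le \max_{1\le i\le k}\|X_i\|$ for all $k$, all $X_i\in\mathbb{M}_n$ and all $C_i\in\mathbb{M}_n$ with $\sum_{i=1}^k C_i^*C_i=I$. It is an $L$-norm if $\sum_{i=1}^k\|C_iXC_i^*\|\le\|X\|$ for all $k$, all $X\in\mathbb{M}_n$ and all $C_i$ with $\sum_{i=1}^k C_i^*C_i=I$. *)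

theory Defs
  imports "HOL-Analysis.Analysis"
begin

text \<open>Complex n x n matrices are represented as complex^'n^'n, with the
  dimension n = CARD('n) given by an arbitrary finite index type.\<close>

definition cadj :: "complex^'n^'n \<Rightarrow> complex^'n^'n" where
  "cadj A = (\<chi> i j. cnj (A $ j $ i))"

definition unitary :: "complex^'n^'n \<Rightarrow> bool" where
  "unitary U \<longleftrightarrow> cadj U ** U = mat 1 \<and> U ** cadj U = mat 1"

definition psd :: "complex^'n^'n \<Rightarrow> bool" where
  "psd P \<longleftrightarrow> cadj P = P \<and>
     (\<forall>x::complex^'n. Re (\<Sum>i\<in>UNIV. cnj (x $ i) * (P *v x) $ i) \<ge> 0)"

definition mabs :: "complex^'n^'n \<Rightarrow> complex^'n^'n" where
  "mabs A = (THE P. psd P \<and> P ** P = cadj A ** A)"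

text \<open>Trace norm ||A||_1 = Tr |A| (a real number since |A| is psd).\<close>
definition trace_norm :: "complex^'n^'n \<Rightarrow> real" where
  "trace_norm A = Re (trace (mabs A))"

definition op_norm :: "complex^'n^'n \<Rightarrow> real" where
  "op_norm A = onorm (\<lambda>x::complex^'n. A *v x)"

definition cscale :: "complex \<Rightarrow> complex^'n^'n \<Rightarrow> complex^'n^'n" where
  "cscale c A = (\<chi> i j. c * A $ i $ j)"

definition is_matrix_norm :: "(complex^'n^'n \<Rightarrow> real) \<Rightarrow> bool" where
  "is_matrix_norm N \<longleftrightarrow>
     (\<forall>A. N A \<ge> 0) \<and> (\<forall>A. N A = 0 \<longleftrightarrow> A = 0) \<and>
     (\<forall>c A. N (cscale c A) = cmod c * N A) \<and>
     (\<forall>A B. N (A + B) \<le> N A + N B)"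

definition unitarily_invariant :: "(complex^'n^'n \<Rightarrow> real) \<Rightarrow> bool" where
  "unitarily_invariant N \<longleftrightarrow> (\<forall>A U V. unitary U \<longrightarrow> unitary V \<longrightarrow> N (U ** A ** V) = N A)"

definition M_norm :: "(complex^'n^'n \<Rightarrow> real) \<Rightarrow> bool" where
  "M_norm N \<longleftrightarrow> (\<forall>(k::nat) (X::nat \<Rightarrow> complex^'n^'n) (C::nat \<Rightarrow> complex^'n^'n).
     (\<Sum>i<k. cadj (C i) ** C i) = mat 1 \<longrightarrow>
     N (\<Sum>i<k. cadj (C i) ** X i ** C i) \<le> Max ((\<lambda>i. N (X i)) ` {..<k}))"

definition L_norm :: "(complex^'n^'n \<Rightarrow> real) \<Rightarrow> bool" where
  "L_norm N \<longleftrightarrow> (\<forall>(k::nat) (X::complex^'n^'n) (C::nat \<Rightarrow> complex^'n^'n).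
     (\<Sum>i<k. cadj (C i) ** C i) = mat 1 \<longrightarrow>
     (\<Sum>i<k. N (C i ** X ** cadj (C i))) \<le> N X)"

end

theory Submission
  imports Defs
begin

text \<open>By the singular value decomposition \<open>A = U diag(s) V\<^sup>*\<close> and unitary invariance,
  \<open>N A = N (diag s)\<close>, so everything reduces to diagonal matrices with nonnegative entries.
  For an M-norm, compressing with the matrix units (\<open>C\<^sub>i = E\<^sub>i\<^sub>i\<close> and \<open>C\<^sub>i = E\<^sub>j\<^sub>i\<close>) gives
  \<open>N (diag s) = (max s) N(I)\<close>; for an L-norm, the triangle inequality together with the
  pinching \<open>C\<^sub>i = E\<^sub>i\<^sub>i\<close> gives \<open>N (diag s) = (\<Sum> s) N(E\<^sub>1\<^sub>1)\<close>, where the family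
  \<open>C\<^sub>r = E\<^sub>i\<^sub>r\<close> shows that \<open>N(E\<^sub>i\<^sub>i)\<close> does not depend on \<open>i\<close>. Finally \<open>max s\<close> and \<open>\<Sum> s\<close>
  are the operator norm and the trace norm of \<open>A\<close>.\<close>

section \<open>The standard inner product on complex vectors\<close>

definition cinner :: "complex^'n \<Rightarrow> complex^'n \<Rightarrow> complex" where
  "cinner x y = (\<Sum>i\<in>UNIV. cnj (x$i) * y$i)"

lemma cinner_add_left: "cinner (a + b) c = cinner a c + cinner b c"
  by (simp add: cinner_def sum.distrib algebra_simps)

lemma cinner_add_right: "cinner a (b + c) = cinner a b + cinner a c"
  by (simp add: cinner_def sum.distrib algebra_simps)

lemma cinner_diff_right: "cinner a (b - c) = cinner a b - cinner a c"
  by (simp add: cinner_def sum_subtractf algebra_simps)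

lemma cinner_smult_left: "cinner (k *s a) c = cnj k * cinner a c"
  by (simp add: cinner_def sum_distrib_left algebra_simps)

lemma cinner_smult_right: "cinner a (k *s c) = k * cinner a c"
  by (simp add: cinner_def sum_distrib_left algebra_simps)

lemma cinner_commute: "cinner b a = cnj (cinner a b)"
  by (simp add: cinner_def mult.commute)

lemma cinner_zero_left [simp]: "cinner 0 a = 0"
  by (simp add: cinner_def)

lemma cinner_zero_right [simp]: "cinner a 0 = 0"
  by (simp add: cinner_def)

lemma cinner_sum_right: "cinner a (\<Sum>i\<in>S. f i) = (\<Sum>i\<in>S. cinner a (f i))"
  by (induction S rule: infinite_finite_induct) (auto simp: cinner_add_right)

lemma cinner_axis: "cinner a (axis k 1) = cnj (a $ k)"
  unfolding cinner_def axis_def by (simp add: if_distrib cong: if_cong)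

lemma scaleR_eq_of_real_smult: "r *\<^sub>R (v::complex^'n) = complex_of_real r *s v"
  by (simp add: vec_eq_iff) (simp add: scaleR_conv_of_real)

lemma cinner_scaleR_left: "cinner (r *\<^sub>R a) b = complex_of_real r * cinner a b"
  by (simp add: scaleR_eq_of_real_smult cinner_smult_left)

lemma cinner_scaleR_right: "cinner a (r *\<^sub>R b) = complex_of_real r * cinner a b"
  by (simp add: scaleR_eq_of_real_smult cinner_smult_right)

lemma cinner_self: "cinner x x = complex_of_real ((norm x)^2)"
proof -
  have "cinner x x = (\<Sum>i\<in>UNIV. complex_of_real ((cmod (x$i))^2))"
    unfolding cinner_def by (intro sum.cong refl) (simp only: complex_norm_square mult.commute)
  also have "\<dots> = complex_of_real ((norm x)^2)"
    by (simp add: norm_vec_def L2_set_def sum_nonneg)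
  finally show ?thesis .
qed

lemma power2_norm_eq_cinner: "(norm x)^2 = Re (cinner x x)"
  by (simp only: cinner_self Re_complex_of_real)

lemma cinner_self_eq_0_iff [simp]: "cinner x x = 0 \<longleftrightarrow> x = 0"
  by (simp add: cinner_self)

lemma continuous_on_cinner_right: "continuous_on S (\<lambda>z. cinner a z)"
  unfolding cinner_def by (intro continuous_intros)

lemma norm_axis_1_complex: "norm (axis j (1::complex)) = 1"
proof -
  have "complex_of_real ((norm (axis j (1::complex)))^2) = 1"
    by (simp only: cinner_self[symmetric] cinner_axis) (simp add: axis_def)
  then show ?thesis by (simp add: power2_eq_1_iff)
qed

lemma matrix_vector_mult_smult: "A *v (k *s (x::complex^'n)) = k *s (A *v x)"
  by (simp add: vec_eq_iff matrix_vector_mult_def sum_distrib_left algebra_simps)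

lemma matrix_vector_mult_scaleR_complex: "A *v (r *\<^sub>R (x::complex^'n)) = r *\<^sub>R (A *v x)"
  by (simp add: scaleR_eq_of_real_smult matrix_vector_mult_smult)

lemma cadj_cadj [simp]: "cadj (cadj A) = A"
  by (simp add: cadj_def vec_eq_iff)

lemma cadj_matrix_mult: "cadj (A ** B) = cadj B ** cadj A"
  unfolding cadj_def matrix_matrix_mult_def
  by (simp add: vec_eq_iff cnj_sum mult.commute)

lemma cadj_diff: "cadj (A - B) = cadj A - cadj B"
  by (simp add: cadj_def vec_eq_iff)

lemma cinner_matrix_vector_mult: "cinner x (A *v y) = cinner (cadj A *v x) y"
proof -
  have "cinner x (A *v y) = (\<Sum>i\<in>UNIV. \<Sum>j\<in>UNIV. cnj (x$i) * A$i$j * y$j)"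
    unfolding cinner_def matrix_vector_mult_def by (simp add: sum_distrib_left mult.assoc)
  also have "\<dots> = (\<Sum>j\<in>UNIV. \<Sum>i\<in>UNIV. cnj (x$i) * A$i$j * y$j)"
    by (rule sum.swap)
  also have "\<dots> = cinner (cadj A *v x) y"
    unfolding cinner_def matrix_vector_mult_def cadj_def
    by (simp add: sum_distrib_left sum_distrib_right cnj_sum mult.commute mult.left_commute)
  finally show ?thesis .
qed

lemma cinner_hermitian: "cadj H = H \<Longrightarrow> cinner x (H *v y) = cinner (H *v x) y"
  by (metis cinner_matrix_vector_mult)

lemma continuous_on_quadratic_form: "continuous_on S (\<lambda>z. Re (cinner z (H *v z)))"
  unfolding cinner_def matrix_vector_mult_def by (intro continuous_intros)

lemma quadratic_form_scaleR:
  "Re (cinner (r *\<^sub>R w) (H *v (r *\<^sub>R w))) = r^2 * Re (cinner w (H *v w))"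
  by (simp add: cinner_scaleR_left cinner_scaleR_right matrix_vector_mult_scaleR_complex
      power2_eq_square)

section \<open>Spectral theorem for Hermitian matrices\<close>

definition orthonormal_on :: "'n set \<Rightarrow> ('n \<Rightarrow> complex^'m) \<Rightarrow> bool" where
  "orthonormal_on S u \<longleftrightarrow> (\<forall>i\<in>S. \<forall>j\<in>S. cinner (u i) (u j) = (if i = j then 1 else 0))"

text \<open>Otherwise every standard basis vector equals its expansion in the family, and summing
  the squared moduli of the coordinates over all basis vectors gives \<open>CARD('n) = card S\<close>.\<close>
lemma exists_nonzero_orthogonal:
  fixes u :: "'n \<Rightarrow> complex^'n"
  assumes on: "orthonormal_on S u" and S: "S \<noteq> UNIV"
  obtains z where "z \<noteq> 0" "\<forall>i\<in>S. cinner (u i) z = 0"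
proof (rule ccontr)
  assume H: "\<not> thesis"
  have key: "(\<Sum>i\<in>S. cnj (u i $ k) * u i $ k) = 1" for k
  proof -
    define z where "z = axis k 1 - (\<Sum>i\<in>S. cinner (u i) (axis k 1) *s u i)"
    have "cinner (u j) z = 0" if "j \<in> S" for j
    proof -
      have "(\<Sum>i\<in>S. cinner (u j) (cinner (u i) (axis k 1) *s u i)) =
            (\<Sum>i\<in>S. (if i = j then cinner (u j) (axis k 1) else 0))"
        using on that unfolding orthonormal_on_def
        by (intro sum.cong refl) (auto simp: cinner_smult_right)
      also have "\<dots> = cinner (u j) (axis k 1)" using that by simp
      finally show ?thesis unfolding z_def by (simp add: cinner_diff_right cinner_sum_right)
    qed
    with H that have "z = 0" by blast
    then have "(axis k (1::complex)) $ k = (\<Sum>i\<in>S. cinner (u i) (axis k 1) *s u i) $ k"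
      unfolding z_def by simp
    then show ?thesis by (simp add: cinner_axis sum_component)
  qed
  have "of_nat CARD('n) = (\<Sum>k\<in>UNIV. \<Sum>i\<in>S. cnj (u i $ k) * u i $ k)"
    using key by simp
  also have "\<dots> = (\<Sum>i\<in>S. cinner (u i) (u i))"
    unfolding cinner_def by (rule sum.swap)
  also have "\<dots> = of_nat (card S)" using on unfolding orthonormal_on_def by simp
  finally have "CARD('n) = card S" by (metis of_nat_eq_iff)
  moreover have "card S < CARD('n)" using S by (simp add: psubset_card_mono psubsetI)
  ultimately show False by simp
qed

lemma linear_coeff_zero_if_quadratic_nonpos:
  fixes a b :: real
  assumes "\<And>t. a * t + b * t^2 \<le> 0"
  shows "a = 0"
proof (rule ccontr)
  assume a: "a \<noteq> 0"
  define s where "s = 1 / (\<bar>b\<bar> + 1)"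
  have s: "s > 0" unfolding s_def by (simp add: add_pos_nonneg)
  have "\<bar>b\<bar> * s < 1" unfolding s_def by (simp add: divide_less_eq_1_pos)
  then have "\<bar>b * s\<bar> < 1" using s by (simp add: abs_mult)
  then have "1 + b * s > 0" by linarith
  moreover have "a^2 * s > 0" using a s by simp
  ultimately have "(a^2 * s) * (1 + b * s) > 0" by simp
  moreover have "a * (a * s) + b * (a * s)^2 = (a^2 * s) * (1 + b * s)"
    by (simp add: algebra_simps power2_eq_square)
  ultimately show False using assms[of "a * s"] by linarith
qed

lemma quadratic_form_attains_max:
  fixes H :: "complex^'n^'n"
  assumes scale: "\<And>a r. a \<in> W \<Longrightarrow> r *\<^sub>R a \<in> W"
    and "closed W" and "z \<in> W" "z \<noteq> 0"
  obtains x where "x \<in> W" "norm x = 1"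
    "\<And>w. w \<in> W \<Longrightarrow> Re (cinner w (H *v w)) \<le> Re (cinner x (H *v x)) * (norm w)^2"
proof -
  define f where "f z = Re (cinner z (H *v z))" for z
  define K where "K = W \<inter> sphere 0 1"
  have "compact K" unfolding K_def using \<open>closed W\<close> by (intro closed_Int_compact) auto
  moreover have "(1 / norm z) *\<^sub>R z \<in> K" unfolding K_def using assms by simp
  then have "K \<noteq> {}" by blast
  ultimately obtain x where x: "x \<in> K" "\<And>y. y \<in> K \<Longrightarrow> f y \<le> f x"
    using continuous_attains_sup[of K f] continuous_on_quadratic_form unfolding f_def by blast
  have "f w \<le> f x * (norm w)^2" if "w \<in> W" for w
  proof (cases "w = 0")
    case False
    have "(1 / norm w) *\<^sub>R w \<in> K" unfolding K_def using that False scale by simp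
    then have "(1 / norm w)^2 * f w \<le> f x"
      using x(2) quadratic_form_scaleR unfolding f_def by metis
    then show ?thesis using False by (simp add: field_simps)
  qed (simp add: f_def)
  moreover have "x \<in> W" "norm x = 1" using x(1) unfolding K_def by auto
  ultimately show ?thesis using that unfolding f_def by blast
qed

text \<open>The first variation of the Rayleigh quotient at a maximizer vanishes in every
  direction of \<open>W\<close>; applied to the direction \<open>H x - \<lambda> x\<close> this forces \<open>H x = \<lambda> x\<close>.\<close>
lemma maximizer_of_quadratic_form_is_eigenvector:
  fixes H :: "complex^'n^'n"
  assumes herm: "cadj H = H"
    and add: "\<And>a b. a \<in> W \<Longrightarrow> b \<in> W \<Longrightarrow> a + b \<in> W"
    and scale: "\<And>a r. a \<in> W \<Longrightarrow> r *\<^sub>R a \<in> W"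
    and x: "x \<in> W" "norm x = 1"
    and max: "\<And>w. w \<in> W \<Longrightarrow> Re (cinner w (H *v w)) \<le> lam * (norm w)^2"
    and lam: "lam = Re (cinner x (H *v x))"
    and residual: "H *v x - complex_of_real lam *s x \<in> W"
  shows "H *v x = complex_of_real lam *s x"
proof -
  define v where "v = H *v x - complex_of_real lam *s x"
  have Hx: "H *v x = v + complex_of_real lam *s x" unfolding v_def by simp
  have cxx: "cinner x x = 1" using x(2) by (simp add: cinner_self)
  define a where "a = Re (cinner v v)"
  define q where "q = Re (cinner v (H *v v))"
  define p where "p = Re (cinner x v) + Re (cinner v x)"
  have "2 * a * t + (q - lam * a) * t^2 \<le> 0" for t
  proof -
    define w where "w = x + t *\<^sub>R v"
    have "w \<in> W" unfolding w_def using x(1) residual add scale v_def by blast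
    then have "Re (cinner w (H *v w)) \<le> lam * Re (cinner w w)"
      using max by (simp add: cinner_self)
    moreover have "cinner x (H *v v) = cinner v v + complex_of_real lam * cinner x v"
      by (simp add: cinner_hermitian[OF herm] Hx cinner_add_left cinner_smult_left)
    moreover have "cinner v (H *v x) = cinner v v + complex_of_real lam * cinner v x"
      by (simp add: Hx cinner_add_right cinner_smult_right)
    ultimately show ?thesis
      unfolding w_def using lam cxx
      by (simp add: cinner_add_left cinner_add_right cinner_scaleR_left cinner_scaleR_right
          matrix_vector_right_distrib matrix_vector_mult_scaleR_complex a_def p_def q_def
          algebra_simps power2_eq_square)
  qed
  then have "2 * a = 0"
    using linear_coeff_zero_if_quadratic_nonpos[of "2 * a" "q - lam * a"] by (simp add: mult.commute)
  then have "v = 0" unfolding a_def by (simp add: cinner_self)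
  then show ?thesis using Hx by simp
qed

lemma hermitian_eigenvector_orthogonal:
  fixes H :: "complex^'n^'n" and u :: "'n \<Rightarrow> complex^'n"
  assumes herm: "cadj H = H" and on: "orthonormal_on S u"
    and eig: "\<forall>i\<in>S. H *v u i = complex_of_real (l i) *s u i" and S: "S \<noteq> UNIV"
  obtains x lam where "norm x = 1" "\<forall>i\<in>S. cinner (u i) x = 0"
    "H *v x = complex_of_real lam *s x"
proof -
  define W where "W = {z. \<forall>i\<in>S. cinner (u i) z = 0}"
  have add: "a + b \<in> W" if "a \<in> W" "b \<in> W" for a b
    using that unfolding W_def by (simp add: cinner_add_right)
  have scale: "r *\<^sub>R a \<in> W" if "a \<in> W" for a r
    using that unfolding W_def by (simp add: cinner_scaleR_right)
  have "closed {z. cinner (u i) z = 0}" for i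
    using continuous_closed_preimage_constant[OF continuous_on_cinner_right closed_UNIV] by simp
  then have "closed W" unfolding W_def Collect_ball_eq by blast
  moreover obtain z where "z \<noteq> 0" "z \<in> W"
    using exists_nonzero_orthogonal[OF on S] unfolding W_def by blast
  ultimately obtain x where x: "x \<in> W" "norm x = 1"
    and max: "\<And>w. w \<in> W \<Longrightarrow> Re (cinner w (H *v w)) \<le> Re (cinner x (H *v x)) * (norm w)^2"
    using quadratic_form_attains_max[OF scale] by metis
  define lam where "lam = Re (cinner x (H *v x))"
  have "cinner (u i) (H *v x - complex_of_real lam *s x) = 0" if "i \<in> S" for i
  proof -
    have "cinner (u i) (H *v x) = cinner (H *v u i) x" by (rule cinner_hermitian[OF herm])
    then show ?thesis
      using eig that x(1) unfolding W_def by (simp add: cinner_smult_left cinner_diff_right cinner_smult_right)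
  qed
  then have "H *v x - complex_of_real lam *s x \<in> W" unfolding W_def by blast
  then have "H *v x = complex_of_real lam *s x"
    using maximizer_of_quadratic_form_is_eigenvector[OF herm add scale x] max lam_def
    by (simp add: mult.commute)
  then show ?thesis using that x unfolding W_def by blast
qed

lemma orthonormal_on_insert:
  assumes on: "orthonormal_on S u" and x: "norm x = 1" "\<forall>i\<in>S. cinner (u i) x = 0"
    and j: "j \<notin> S"
  shows "orthonormal_on (insert j S) (u(j := x))"
  unfolding orthonormal_on_def
proof (intro ballI)
  fix i k assume "i \<in> insert j S" "k \<in> insert j S"
  moreover have "cinner x x = 1" using x(1) by (simp add: cinner_self)
  moreover have "cinner x (u i) = 0" if "i \<in> S" for i
    using x(2) that cinner_commute[of x "u i"] by simp
  ultimately show "cinner ((u(j := x)) i) ((u(j := x)) k) = (if i = k then 1 else 0)"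
    using on x(2) j unfolding orthonormal_on_def by (cases "i = j"; cases "k = j") auto
qed

lemma hermitian_orthonormal_eigenbasis_extend:
  fixes H :: "complex^'n^'n" and u :: "'n \<Rightarrow> complex^'n"
  assumes herm: "cadj H = H"
  shows "orthonormal_on S u \<Longrightarrow> \<forall>i\<in>S. H *v u i = complex_of_real (l i) *s u i \<Longrightarrow>
    \<exists>u' l'. orthonormal_on UNIV u' \<and> (\<forall>i. H *v u' i = complex_of_real (l' i) *s u' i) \<and>
      (\<forall>i\<in>S. u' i = u i)"
proof (induction "card (UNIV - S)" arbitrary: S u l)
  case 0
  then have "S = UNIV" by auto
  then show ?case using 0 by blast
next
  case (Suc n)
  have "UNIV - S \<noteq> {}" using Suc.hyps(2) by (metis card.empty nat.distinct(1))
  then obtain j where j: "j \<notin> S" by blast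
  with Suc.prems obtain x lam where x: "norm x = 1" "\<forall>i\<in>S. cinner (u i) x = 0"
    "H *v x = complex_of_real lam *s x"
    using hermitian_eigenvector_orthogonal[OF herm] by blast
  have "UNIV - insert j S = (UNIV - S) - {j}" by blast
  then have "n = card (UNIV - insert j S)" using Suc.hyps(2) j by simp
  moreover have "orthonormal_on (insert j S) (u(j := x))"
    using orthonormal_on_insert[OF Suc.prems(1) x(1,2) j] .
  moreover have "\<forall>i\<in>insert j S. H *v (u(j := x)) i = complex_of_real ((l(j := lam)) i) *s (u(j := x)) i"
    using Suc.prems(2) x(3) j by auto
  ultimately obtain u' l' where "orthonormal_on UNIV u'"
    "\<forall>i. H *v u' i = complex_of_real (l' i) *s u' i" "\<forall>i\<in>insert j S. u' i = (u(j := x)) i"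
    using Suc.hyps(1) by blast
  then show ?case using j by (metis fun_upd_other insertCI)
qed

lemma hermitian_orthonormal_eigenbasis:
  fixes H :: "complex^'n^'n"
  assumes "cadj H = H"
  obtains u :: "'n \<Rightarrow> complex^'n" and l where "orthonormal_on UNIV u"
    "\<forall>i. H *v u i = complex_of_real (l i) *s u i"
  using hermitian_orthonormal_eigenbasis_extend[OF assms, of "{}" "\<lambda>_. 0" "\<lambda>_. 0"]
  by (auto simp: orthonormal_on_def)

text \<open>The zero matrix is Hermitian and every vector is an eigenvector of it.\<close>
lemma orthonormal_on_extend:
  fixes w :: "'n \<Rightarrow> complex^'n"
  assumes "orthonormal_on S w"
  obtains u where "orthonormal_on UNIV u" "\<forall>i\<in>S. u i = w i"
  using hermitian_orthonormal_eigenbasis_extend[of 0 S w "\<lambda>_. 0"] assms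
  by (auto simp: cadj_def vec_eq_iff)

section \<open>Singular value decomposition\<close>

lemma unitary_cadj: "unitary U \<Longrightarrow> unitary (cadj U)"
  by (simp add: unitary_def)

lemma unitary_mult_cancel:
  assumes "unitary V"
  shows "A ** V ** cadj V = A" and "A ** cadj V ** V = A"
  using assms by (simp_all add: unitary_def flip: matrix_mul_assoc)

lemma norm_unitary_mult: "unitary U \<Longrightarrow> norm (U *v x) = norm x"
proof -
  assume "unitary U"
  then have "cinner (U *v x) (U *v x) = cinner x x"
    by (simp add: cinner_matrix_vector_mult matrix_vector_mul_assoc unitary_def)
  then have "(norm (U *v x))^2 = (norm x)^2" by (simp only: power2_norm_eq_cinner)
  then show ?thesis by (metis norm_ge_zero power2_eq_iff_nonneg)
qed

definition diag_mat :: "('n \<Rightarrow> real) \<Rightarrow> complex^'n^'n" where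
  "diag_mat d = (\<chi> i j. if i = j then complex_of_real (d i) else 0)"

lemma diag_mat_mult_vec: "diag_mat d *v y = (\<chi> i. complex_of_real (d i) * y$i)"
  by (simp add: diag_mat_def matrix_vector_mult_def vec_eq_iff if_distrib if_distribR cong: if_cong)

lemma cadj_diag_mat: "cadj (diag_mat d) = diag_mat d"
  by (simp add: cadj_def diag_mat_def vec_eq_iff)

definition column_matrix :: "('n \<Rightarrow> complex^'n) \<Rightarrow> complex^'n^'n" where
  "column_matrix u = (\<chi> r c. u c $ r)"

lemma unitary_column_matrix: "orthonormal_on UNIV u \<Longrightarrow> unitary (column_matrix u)"
proof -
  assume "orthonormal_on UNIV u"
  then have "cadj (column_matrix u) ** column_matrix u = mat 1"
    by (simp add: orthonormal_on_def cadj_def column_matrix_def matrix_matrix_mult_def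
        cinner_def mat_def vec_eq_iff)
  then show ?thesis unfolding unitary_def using matrix_left_right_inverse by blast
qed

lemma matrix_mult_column_matrix: "A ** column_matrix u = column_matrix (\<lambda>c. A *v u c)"
  by (simp add: column_matrix_def matrix_matrix_mult_def matrix_vector_mult_def vec_eq_iff)

lemma column_matrix_mult_diag_mat:
  "column_matrix u ** diag_mat d = column_matrix (\<lambda>c. complex_of_real (d c) *s u c)"
  by (simp add: column_matrix_def diag_mat_def matrix_matrix_mult_def vec_eq_iff if_distrib
      if_distribR mult.commute cong: if_cong)

text \<open>The right singular vectors \<open>v\<close> are an eigenbasis of \<open>A\<^sup>* A\<close>; the images \<open>A v\<^sub>c\<close> are
  orthogonal, and normalising the nonzero ones and extending gives the left singular
  vectors \<open>u\<close>.\<close>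
lemma singular_vectors:
  fixes A :: "complex^'n^'n"
  obtains u v :: "'n \<Rightarrow> complex^'n" and s where "orthonormal_on UNIV u" "orthonormal_on UNIV v"
    "\<forall>i. s i \<ge> 0" "\<forall>c. A *v v c = complex_of_real (s c) *s u c"
proof -
  have "cadj (cadj A ** A) = cadj A ** A" by (simp add: cadj_matrix_mult)
  then obtain v :: "'n \<Rightarrow> complex^'n" and lam where v: "orthonormal_on UNIV v"
    and eig: "\<forall>i. (cadj A ** A) *v v i = complex_of_real (lam i) *s v i"
    by (rule hermitian_orthonormal_eigenbasis)
  have inner: "cinner (A *v v i) (A *v v j) = (if i = j then complex_of_real (lam i) else 0)"
    for i j
  proof -
    have "cinner (A *v v i) (A *v v j) = cinner (v i) ((cadj A ** A) *v v j)"
      by (simp add: cinner_matrix_vector_mult matrix_vector_mul_assoc[symmetric])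
    also have "\<dots> = complex_of_real (lam j) * cinner (v i) (v j)"
      using eig by (simp add: cinner_smult_right)
    finally show ?thesis using v unfolding orthonormal_on_def by auto
  qed
  have lam: "lam i = (norm (A *v v i))^2" for i
    using inner[of i i] power2_norm_eq_cinner[of "A *v v i"] by simp
  define s where "s i = sqrt (lam i)" for i
  define S where "S = {i. lam i > 0}"
  define w where "w i = (1 / s i) *\<^sub>R (A *v v i)" for i
  have "orthonormal_on S w"
    unfolding orthonormal_on_def
  proof (intro ballI)
    fix i j assume "i \<in> S" "j \<in> S"
    have "lam i \<ge> 0" using lam by simp
    then have "s i * s i = lam i" by (simp add: s_def)
    then have "(1 / s i) * ((1 / s i) * lam i) = 1"
      using \<open>i \<in> S\<close> unfolding S_def by (simp add: field_simps)
    then have "complex_of_real (1 / s i) * (complex_of_real (1 / s i) * complex_of_real (lam i)) = 1"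
      by (metis of_real_1 of_real_mult)
    then show "cinner (w i) (w j) = (if i = j then 1 else 0)"
      unfolding w_def
      by (cases "i = j") (simp_all add: cinner_scaleR_left cinner_scaleR_right inner)
  qed
  then obtain u where u: "orthonormal_on UNIV u" "\<forall>i\<in>S. u i = w i"
    by (rule orthonormal_on_extend)
  have "A *v v c = complex_of_real (s c) *s u c" for c
  proof (cases "lam c > 0")
    case True
    then have "s c > 0" unfolding s_def by simp
    moreover have "u c = (1 / s c) *\<^sub>R (A *v v c)" using u(2) True unfolding S_def w_def by simp
    ultimately show ?thesis by (simp add: scaleR_eq_of_real_smult[symmetric])
  next
    case False
    then have "lam c = 0" using lam[of c] by simp
    then show ?thesis using lam[of c] by (simp add: s_def)
  qed
  moreover have "\<forall>i. s i \<ge> 0" unfolding s_def using lam by simp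
  ultimately show ?thesis using that u(1) v by blast
qed

lemma svd:
  fixes A :: "complex^'n^'n"
  obtains U V s where "unitary U" "unitary V" "\<forall>i. s i \<ge> 0" "A = U ** diag_mat s ** cadj V"
proof -
  obtain u v :: "'n \<Rightarrow> complex^'n" and s
    where u: "orthonormal_on UNIV u" and v: "orthonormal_on UNIV v" and s: "\<forall>i. s i \<ge> 0" and col: "\<forall>c. A *v v c = complex_of_real (s c) *s u c"
    by (rule singular_vectors[of A])
  have "A ** column_matrix v = column_matrix u ** diag_mat s"
    using col by (simp add: matrix_mult_column_matrix column_matrix_mult_diag_mat)
  then have "A = column_matrix u ** diag_mat s ** cadj (column_matrix v)"
    using unitary_column_matrix[OF v] by (metis matrix_mul_assoc matrix_mul_rid unitary_def)
  then show ?thesis using that unitary_column_matrix[OF u] unitary_column_matrix[OF v] s by blast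
qed

section \<open>Operator norm and trace norm in terms of singular values\<close>

lemma norm_diag_mat_mult_le:
  assumes "\<forall>i. s i \<ge> 0"
  shows "norm (diag_mat s *v y) \<le> Max (range s) * norm y"
proof -
  have "norm (diag_mat s *v y) \<le> norm (Max (range s) *\<^sub>R y)"
  proof (rule norm_le_componentwise_cart)
    fix i
    have "s i \<le> Max (range s)" "0 \<le> Max (range s)"
      using assms order_trans[of 0 "s i"] by simp_all
    then show "norm ((diag_mat s *v y) $ i) \<le> norm ((Max (range s) *\<^sub>R y) $ i)"
      using assms by (simp add: diag_mat_mult_vec norm_mult mult_right_mono)
  qed
  also have "\<dots> = Max (range s) * norm y"
    using assms by (simp add: Max_ge_iff)
  finally show ?thesis .
qed

lemma op_norm_svd:
  assumes U: "unitary U" and V: "unitary V" and s: "\<forall>i. s i \<ge> 0"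
  shows "op_norm (U ** diag_mat s ** cadj V) = Max (range s)"
proof -
  define A where "A = U ** diag_mat s ** cadj V"
  have Ax: "A *v x = U *v (diag_mat s *v (cadj V *v x))" for x
    unfolding A_def by (simp add: matrix_vector_mul_assoc matrix_mul_assoc)
  have "onorm ((*v) A) \<le> Max (range s)"
  proof (rule onorm_le)
    fix x
    have "norm (A *v x) = norm (diag_mat s *v (cadj V *v x))"
      unfolding Ax by (simp add: norm_unitary_mult[OF U])
    also have "\<dots> \<le> Max (range s) * norm x"
      using norm_diag_mat_mult_le[OF s] norm_unitary_mult[OF unitary_cadj[OF V]] by metis
    finally show "norm (A *v x) \<le> Max (range s) * norm x" .
  qed
  moreover have "Max (range s) \<le> onorm ((*v) A)"
  proof -
    have "Max (range s) \<in> range s" by (rule Max_in) auto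
    then obtain j where j: "s j = Max (range s)" by (metis rangeE)
    define x where "x = V *v axis j 1"
    have "cadj V *v x = axis j 1"
      unfolding x_def using V by (simp add: matrix_vector_mul_assoc unitary_def)
    moreover have "diag_mat s *v axis j 1 = s j *\<^sub>R axis j 1"
      by (simp add: diag_mat_mult_vec scaleR_eq_of_real_smult vec_eq_iff axis_def)
    ultimately have "A *v x = U *v (s j *\<^sub>R axis j 1)" unfolding Ax by simp
    then have "norm (A *v x) = Max (range s)"
      using j s[rule_format, of j] by (simp add: norm_unitary_mult[OF U] norm_axis_1_complex)
    moreover have "norm x = 1" unfolding x_def by (simp add: norm_unitary_mult[OF V] norm_axis_1_complex)
    moreover have "norm (A *v x) \<le> onorm ((*v) A) * norm x" by (rule onorm) simp
    ultimately show ?thesis by simp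
  qed
  ultimately show ?thesis unfolding op_norm_def A_def by simp
qed

lemma psd_iff_quadratic_form: "psd P \<longleftrightarrow> cadj P = P \<and> (\<forall>x. Re (cinner x (P *v x)) \<ge> 0)"
  unfolding psd_def cinner_def ..

lemma cinner_diag_mat:
  "cinner x (diag_mat d *v x) = complex_of_real (\<Sum>i\<in>UNIV. d i * (cmod (x$i))^2)"
proof -
  have "cnj (x$i) * (complex_of_real (d i) * x$i) = complex_of_real (d i * (cmod (x$i))^2)" for i
  proof -
    have "cnj (x$i) * (complex_of_real (d i) * x$i) = complex_of_real (d i) * (x$i * cnj (x$i))"
      by (simp add: mult_ac)
    then show ?thesis by (simp only: of_real_mult complex_norm_square)
  qed
  then show ?thesis
    unfolding cinner_def diag_mat_mult_vec vec_lambda_beta of_real_sum by (rule sum.cong[OF refl])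
qed

lemma psd_diag_mat: "\<forall>i. d i \<ge> 0 \<Longrightarrow> psd (diag_mat d)"
  unfolding psd_iff_quadratic_form cadj_diag_mat cinner_diag_mat by (simp add: sum_nonneg)

lemma psd_cadj_mult_mult: "psd Q \<Longrightarrow> psd (cadj W ** Q ** W)"
proof -
  assume Q: "psd Q"
  have "cinner x ((cadj W ** Q ** W) *v x) = cinner (W *v x) (Q *v (W *v x))" for x
    by (simp add: matrix_vector_mul_assoc[symmetric] cinner_matrix_vector_mult)
  then show ?thesis using Q by (simp add: psd_iff_quadratic_form cadj_matrix_mult matrix_mul_assoc)
qed

lemma matrix_mult_diag_mat_nth: "(M ** diag_mat b) $ i $ j = M$i$j * complex_of_real (b j)"
  unfolding matrix_matrix_mult_def diag_mat_def
  by (simp add: if_distrib[of "\<lambda>x. _ * x"] cong: if_cong)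

lemma diag_mat_mult_matrix_nth: "(diag_mat a ** M) $ i $ j = complex_of_real (a i) * M$i$j"
  unfolding matrix_matrix_mult_def diag_mat_def
  by (simp add: if_distrib[of "\<lambda>x. x * _"] cong: if_cong)

lemma diag_mat_mult_vec_eq_0_if_psd_add:
  assumes Q: "psd Q" and d: "\<forall>i. d i \<ge> 0" and y: "Q *v y + diag_mat d *v y = 0"
  shows "diag_mat d *v y = 0"
proof -
  have "cinner y (Q *v y) + cinner y (diag_mat d *v y) = 0"
    using y cinner_add_right[of y "Q *v y" "diag_mat d *v y"] by simp
  then have "Re (cinner y (Q *v y)) + Re (cinner y (diag_mat d *v y)) = 0"
    by (metis plus_complex.sel(1) zero_complex.sel(1))
  moreover have "Re (cinner y (Q *v y)) \<ge> 0" using Q by (simp add: psd_iff_quadratic_form)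
  moreover have nonneg: "\<And>i. d i * (cmod (y$i))^2 \<ge> 0" using d by simp
  moreover have "(\<Sum>i\<in>UNIV. d i * (cmod (y$i))^2) \<ge> 0" using nonneg by (simp add: sum_nonneg)
  ultimately have "(\<Sum>i\<in>UNIV. d i * (cmod (y$i))^2) = 0" unfolding cinner_diag_mat by simp
  then have "\<forall>i. d i * (cmod (y$i))^2 = 0" using nonneg by (simp add: sum_nonneg_eq_0_iff)
  then show ?thesis by (simp add: diag_mat_mult_vec vec_eq_iff)
qed

text \<open>Entrywise, commuting with \<open>D\<^sup>2\<close> says \<open>Q\<^sub>i\<^sub>j d\<^sub>j\<^sup>2 = d\<^sub>i\<^sup>2 Q\<^sub>i\<^sub>j\<close>, and since the
  \<open>d\<^sub>i\<close> are nonnegative this is equivalent to \<open>Q\<^sub>i\<^sub>j d\<^sub>j = d\<^sub>i Q\<^sub>i\<^sub>j\<close>.\<close>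
lemma commute_diag_mat_if_commute_square:
  assumes d: "\<forall>i. d i \<ge> 0"
    and comm: "Q ** (diag_mat d ** diag_mat d) = (diag_mat d ** diag_mat d) ** Q"
  shows "Q ** diag_mat d = diag_mat d ** Q"
proof -
  have "Q$i$j * complex_of_real (d j) = complex_of_real (d i) * Q$i$j" for i j
  proof (cases "Q$i$j = 0")
    case False
    have "diag_mat d ** diag_mat d = diag_mat (\<lambda>i. d i * d i)"
      by (simp add: vec_eq_iff diag_mat_mult_matrix_nth) (simp add: diag_mat_def)
    then have "(Q ** diag_mat (\<lambda>i. d i * d i)) $ i $ j = (diag_mat (\<lambda>i. d i * d i) ** Q) $ i $ j"
      using comm by simp
    then have "(d j)^2 = (d i)^2"
      using False by (simp add: matrix_mult_diag_mat_nth diag_mat_mult_matrix_nth power2_eq_square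
          mult.commute flip: of_real_mult)
    then have "d j = d i" using d by (simp add: power2_eq_iff_nonneg)
    then show ?thesis by (simp add: mult.commute)
  qed simp
  then show ?thesis by (simp add: vec_eq_iff matrix_mult_diag_mat_nth diag_mat_mult_matrix_nth)
qed

lemma hermitian_square_eq_0:
  assumes "cadj R = R" and "R ** R = 0"
  shows "R = 0"
proof -
  have "cinner (R *v x) (R *v x) = 0" for x
    using assms by (simp add: cinner_matrix_vector_mult matrix_vector_mul_assoc)
  then show ?thesis by (simp add: matrix_eq)
qed

text \<open>For \<open>y = (Q - D) x\<close> one has \<open>(Q + D) y = Q\<^sup>2 x - D\<^sup>2 x = 0\<close> because \<open>Q\<close> and \<open>D\<close>
  commute; positivity of both summands forces \<open>Q y = D y = 0\<close>, so \<open>(Q - D)\<^sup>2 = 0\<close>.\<close>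
lemma psd_sqrt_diag_mat_unique:
  assumes Q: "psd Q" and d: "\<forall>i. d i \<ge> 0" and QQ: "Q ** Q = diag_mat d ** diag_mat d"
  shows "Q = diag_mat d"
proof -
  define D where "D = diag_mat d"
  have "Q ** (D ** D) = (D ** D) ** Q"
    using matrix_mul_assoc[of Q Q Q] unfolding QQ D_def .
  then have QD: "Q ** D = D ** Q" unfolding D_def by (rule commute_diag_mat_if_commute_square[OF d])
  have "(Q + D) ** (Q - D) = Q ** Q - Q ** D + D ** Q - D ** D"
    by (simp add: matrix_matrix_mult_def vec_eq_iff sum.distrib sum_subtractf algebra_simps)
  then have QD0: "(Q + D) ** (Q - D) = 0" using QQ QD unfolding D_def by simp
  have "(Q - D) *v ((Q - D) *v x) = 0" for x
  proof -
    define y where "y = (Q - D) *v x"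
    have "Q *v y + D *v y = ((Q + D) ** (Q - D)) *v x"
      unfolding y_def by (simp add: matrix_vector_mult_add_rdistrib flip: matrix_vector_mul_assoc)
    then have sum: "Q *v y + D *v y = 0" using QD0 by simp
    then have "D *v y = 0" unfolding D_def by (rule diag_mat_mult_vec_eq_0_if_psd_add[OF Q d])
    then have "(Q - D) *v y = 0" using sum by (simp add: matrix_vector_mult_diff_rdistrib)
    then show ?thesis unfolding y_def .
  qed
  then have "(Q - D) ** (Q - D) = 0"
    unfolding matrix_eq by (simp flip: matrix_vector_mul_assoc)
  moreover have "cadj (Q - D) = Q - D"
    using Q by (simp add: psd_iff_quadratic_form cadj_diff D_def cadj_diag_mat)
  ultimately have "Q - D = 0" by (rule hermitian_square_eq_0[rotated])
  then show ?thesis unfolding D_def by simp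
qed

lemma mabs_svd:
  assumes U: "unitary U" and V: "unitary V" and s: "\<forall>i. s i \<ge> 0"
  shows "mabs (U ** diag_mat s ** cadj V) = V ** diag_mat s ** cadj V"
  unfolding mabs_def
proof (rule the_equality)
  let ?D = "diag_mat s"
  have AA: "cadj (U ** ?D ** cadj V) ** (U ** ?D ** cadj V) = V ** ?D ** ?D ** cadj V"
    by (simp add: cadj_matrix_mult cadj_diag_mat matrix_mul_assoc unitary_mult_cancel[OF U])
  have PP: "(V ** ?D ** cadj V) ** (V ** ?D ** cadj V) = V ** ?D ** ?D ** cadj V"
    by (simp add: matrix_mul_assoc unitary_mult_cancel[OF V])
  show "psd (V ** ?D ** cadj V) \<and> (V ** ?D ** cadj V) ** (V ** ?D ** cadj V) =
      cadj (U ** ?D ** cadj V) ** (U ** ?D ** cadj V)"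
    using psd_cadj_mult_mult[OF psd_diag_mat[OF s], of "cadj V"] AA PP by simp
  fix Q assume "psd Q \<and> Q ** Q = cadj (U ** ?D ** cadj V) ** (U ** ?D ** cadj V)"
  then have Q: "psd Q" and QQ: "Q ** Q = V ** ?D ** ?D ** cadj V" using AA by auto
  have "(cadj V ** Q ** V) ** (cadj V ** Q ** V) = cadj V ** (Q ** Q) ** V"
    by (simp add: matrix_mul_assoc unitary_mult_cancel[OF V])
  also have "\<dots> = ?D ** ?D"
    using V unfolding QQ by (simp add: matrix_mul_assoc unitary_mult_cancel[OF V] unitary_def)
  finally have "cadj V ** Q ** V = ?D"
    by (rule psd_sqrt_diag_mat_unique[OF psd_cadj_mult_mult[OF Q] s])
  then have "V ** (cadj V ** Q ** V) ** cadj V = V ** ?D ** cadj V" by simp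
  then show "Q = V ** ?D ** cadj V"
    using V by (simp add: matrix_mul_assoc unitary_mult_cancel[OF V] unitary_def)
qed

lemma trace_norm_svd:
  assumes U: "unitary U" and V: "unitary V" and s: "\<forall>i. s i \<ge> 0"
  shows "trace_norm (U ** diag_mat s ** cadj V) = (\<Sum>i\<in>UNIV. s i)"
proof -
  have "trace (V ** diag_mat s ** cadj V) = trace (diag_mat s ** cadj V ** V)"
    using trace_mul_sym[of V "diag_mat s ** cadj V"] by (simp add: matrix_mul_assoc)
  also have "\<dots> = complex_of_real (\<Sum>i\<in>UNIV. s i)"
    by (simp add: unitary_mult_cancel[OF V] trace_def diag_mat_def of_real_sum)
  finally show ?thesis unfolding trace_norm_def mabs_svd[OF assms] by simp
qed

section \<open>M-norms and L-norms\<close>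

definition mat_unit :: "'n \<Rightarrow> 'n \<Rightarrow> complex^'n^'n" where
  "mat_unit a b = (\<chi> r c. if r = a \<and> c = b then 1 else 0)"

lemma mat_unit_mult_left: "mat_unit a b ** M = (\<chi> r t. if r = a then M$b$t else 0)"
proof -
  have "(\<Sum>k\<in>UNIV. (if r = a \<and> k = b then 1 else 0) * M$k$t) = (if r = a then M$b$t else 0)"
    for r t
    by (cases "r = a") (simp_all add: if_distrib[of "\<lambda>x. x * _"] cong: if_cong)
  then show ?thesis by (simp add: mat_unit_def matrix_matrix_mult_def vec_eq_iff)
qed

lemma mat_unit_mult_right: "M ** mat_unit c e = (\<chi> r t. if t = e then M$r$c else 0)"
proof -
  have "(\<Sum>k\<in>UNIV. M$r$k * (if k = c \<and> t = e then 1 else 0)) = (if t = e then M$r$c else 0)"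
    for r t
    by (cases "t = e") (simp_all add: if_distrib[of "\<lambda>x. _ * x"] cong: if_cong)
  then show ?thesis by (simp add: mat_unit_def matrix_matrix_mult_def vec_eq_iff)
qed

lemma mat_unit_mult: "mat_unit a b ** mat_unit c e = (if b = c then mat_unit a e else 0)"
  unfolding mat_unit_mult_left by (auto simp: mat_unit_def vec_eq_iff)

lemma cadj_mat_unit: "cadj (mat_unit a b) = mat_unit b a"
  by (auto simp: cadj_def mat_unit_def vec_eq_iff)

lemma mat_unit_neq_0: "mat_unit a b \<noteq> 0"
  by (simp add: mat_unit_def vec_eq_iff)

lemma cscale_of_real: "cscale (complex_of_real r) A = r *\<^sub>R A"
  by (simp add: cscale_def vec_eq_iff of_real_def)

lemma mat_unit_mult_diag_mat_mult:
  "mat_unit a b ** diag_mat d ** mat_unit c e = (if b = c then d b *\<^sub>R mat_unit a e else 0)"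
  unfolding mat_unit_mult_right mat_unit_mult_left
  by (auto simp: diag_mat_def mat_unit_def vec_eq_iff of_real_def)

lemma diag_mat_eq_sum_mat_unit:
  fixes d :: "'n::finite \<Rightarrow> real"
  shows "diag_mat d = (\<Sum>k\<in>UNIV. d k *\<^sub>R mat_unit k k)"
proof -
  have "(\<Sum>k\<in>UNIV. d k *\<^sub>R (if i = k \<and> j = k then 1 else 0)) =
      (if i = j then complex_of_real (d i) else 0)" for i j :: 'n
  proof (cases "i = j")
    case True
    then have "(\<Sum>k\<in>UNIV. d k *\<^sub>R (if i = k \<and> j = k then 1 else 0)) =
        (\<Sum>k\<in>UNIV. if k = i then complex_of_real (d k) else 0)"
      by (intro sum.cong) (auto simp: scaleR_conv_of_real)
    then show ?thesis using True by simp
  qed (auto intro: sum.neutral)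
  moreover have "(\<Sum>k\<in>UNIV. d k *\<^sub>R mat_unit k k) $ i $ j =
      (\<Sum>k\<in>UNIV. d k *\<^sub>R (if i = k \<and> j = k then 1 else 0))" for i j
    by (simp only: sum_component vector_scaleR_component) (simp add: mat_unit_def)
  ultimately show ?thesis by (simp add: vec_eq_iff diag_mat_def)
qed

lemma diag_mat_const: "diag_mat (\<lambda>_. r) = r *\<^sub>R mat 1"
proof -
  have "r *\<^sub>R (1::complex) = complex_of_real r" by (simp add: scaleR_conv_of_real)
  then show ?thesis by (simp add: diag_mat_def mat_def vec_eq_iff)
qed

lemma sum_mat_unit_diagonal: "(\<Sum>k\<in>UNIV. mat_unit k k) = mat 1"
proof -
  have "(\<Sum>k\<in>UNIV. mat_unit k k) = diag_mat (\<lambda>_. 1)"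
    by (subst diag_mat_eq_sum_mat_unit) simp
  also have "\<dots> = mat 1" by (simp add: diag_mat_const)
  finally show ?thesis .
qed

lemma matrix_norm_scaleR: "is_matrix_norm N \<Longrightarrow> N (r *\<^sub>R A) = \<bar>r\<bar> * N A"
  by (metis cscale_of_real is_matrix_norm_def norm_of_real)

lemma matrix_norm_pos: "is_matrix_norm N \<Longrightarrow> A \<noteq> 0 \<Longrightarrow> N A > 0"
  unfolding is_matrix_norm_def by (metis less_eq_real_def)

lemma matrix_norm_zero: "is_matrix_norm N \<Longrightarrow> N 0 = 0"
  by (simp add: is_matrix_norm_def)

lemma matrix_norm_sum_le: "is_matrix_norm N \<Longrightarrow> N (\<Sum>k\<in>F. f k) \<le> (\<Sum>k\<in>F. N (f k))"
proof (induction F rule: infinite_finite_induct)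
  case (insert x F)
  then have "N (f x + (\<Sum>k\<in>F. f k)) \<le> N (f x) + (\<Sum>k\<in>F. N (f k))"
    unfolding is_matrix_norm_def by (meson add_left_mono order_trans)
  then show ?case using insert by simp
qed (simp_all add: matrix_norm_zero)

lemma unitarily_invariant_svd:
  "unitarily_invariant N \<Longrightarrow> unitary U \<Longrightarrow> unitary V \<Longrightarrow> N (U ** D ** cadj V) = N D"
  unfolding unitarily_invariant_def using unitary_cadj by blast

text \<open>The definitions of M- and L-norms index families by an initial segment of the naturals;
  enumerating the finite index type turns them into families indexed by \<open>'n\<close>.\<close>
lemma enumerate_index_type:
  obtains g :: "nat \<Rightarrow> 'n::finite" where "bij_betw g {..<CARD('n)} UNIV"
  using ex_bij_betw_nat_finite[of "UNIV::'n set"] by (auto simp: atLeast0LessThan)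

lemma M_norm_UNIV:
  fixes C X :: "'n \<Rightarrow> complex^'n^'n"
  assumes M: "M_norm N" and C: "(\<Sum>j\<in>UNIV. cadj (C j) ** C j) = mat 1"
  shows "N (\<Sum>j\<in>UNIV. cadj (C j) ** X j ** C j) \<le> Max (range (\<lambda>j. N (X j)))"
proof -
  obtain g :: "nat \<Rightarrow> 'n" where g: "bij_betw g {..<CARD('n)} UNIV"
    by (rule enumerate_index_type)
  have reindex: "(\<Sum>i<CARD('n). F (g i)) = (\<Sum>j\<in>UNIV. F j)" for F :: "'n \<Rightarrow> complex^'n^'n"
    using sum.reindex_bij_betw[OF g] by simp
  have "(\<lambda>i. N (X (g i))) ` {..<CARD('n)} = range (\<lambda>j. N (X j))"
    using bij_betw_imp_surj_on[OF g] by (metis image_image)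
  moreover have "(\<Sum>i<CARD('n). cadj (C (g i)) ** C (g i)) = mat 1"
    using C reindex[of "\<lambda>j. cadj (C j) ** C j"] by simp
  ultimately show ?thesis
    using M[unfolded M_norm_def, rule_format, where k = "CARD('n)" and C = "\<lambda>i. C (g i)"
        and X = "\<lambda>i. X (g i)"]
    by (simp add: reindex[of "\<lambda>j. cadj (C j) ** X j ** C j"])
qed

lemma L_norm_UNIV:
  fixes C :: "'n \<Rightarrow> complex^'n^'n"
  assumes L: "L_norm N" and C: "(\<Sum>j\<in>UNIV. cadj (C j) ** C j) = mat 1"
  shows "(\<Sum>j\<in>UNIV. N (C j ** X ** cadj (C j))) \<le> N X"
proof -
  obtain g :: "nat \<Rightarrow> 'n" where g: "bij_betw g {..<CARD('n)} UNIV"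
    by (rule enumerate_index_type)
  have reindex: "(\<Sum>i<CARD('n). F (g i)) = (\<Sum>j\<in>UNIV. F j)" for F :: "'n \<Rightarrow> 'b::comm_monoid_add"
    using sum.reindex_bij_betw[OF g] by simp
  have "(\<Sum>i<CARD('n). cadj (C (g i)) ** C (g i)) = mat 1"
    using C reindex[of "\<lambda>j. cadj (C j) ** C j"] by simp
  then show ?thesis
    using L[unfolded L_norm_def, rule_format, where k = "CARD('n)" and X = X and C = "\<lambda>i. C (g i)"]
    by (simp add: reindex[of "\<lambda>j. N (C j ** X ** cadj (C j))"])
qed

lemma M_norm_diag_mat:
  fixes s :: "'n::finite \<Rightarrow> real"
  assumes N: "is_matrix_norm N" and M: "M_norm N" and s: "\<forall>i. s i \<ge> 0"
  shows "N (diag_mat s) = Max (range s) * N (mat 1)"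
proof (rule antisym)
  have units: "(\<Sum>i\<in>UNIV. cadj (mat_unit i i) ** mat_unit i i) = mat 1"
    by (simp add: cadj_mat_unit mat_unit_mult sum_mat_unit_diagonal)
  have "diag_mat s = (\<Sum>i\<in>UNIV. cadj (mat_unit i i) ** diag_mat (\<lambda>_. s i) ** mat_unit i i)"
    by (simp add: cadj_mat_unit mat_unit_mult_diag_mat_mult diag_mat_eq_sum_mat_unit[of s])
  also have "N \<dots> \<le> Max (range (\<lambda>i. N (diag_mat (\<lambda>_. s i))))"
    by (rule M_norm_UNIV[OF M units])
  also have "\<dots> \<le> Max (range s) * N (mat 1)"
  proof (rule Max.boundedI)
    fix y assume "y \<in> range (\<lambda>i. N (diag_mat (\<lambda>_. s i)))"
    then obtain i where "y = s i * N (mat 1)"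
      using s by (auto simp: diag_mat_const matrix_norm_scaleR[OF N])
    moreover have "s i \<le> Max (range s)" "N (mat 1) \<ge> 0" using N by (simp_all add: is_matrix_norm_def)
    ultimately show "y \<le> Max (range s) * N (mat 1)" by (simp add: mult_right_mono)
  qed auto
  finally show "N (diag_mat s) \<le> Max (range s) * N (mat 1)" .
next
  have "Max (range s) \<in> range s" by (rule Max_in) auto
  then obtain j where j: "s j = Max (range s)" by (metis rangeE)
  have units: "(\<Sum>i\<in>UNIV. cadj (mat_unit j i) ** mat_unit j i) = mat 1"
    by (simp add: cadj_mat_unit mat_unit_mult sum_mat_unit_diagonal)
  have "s j *\<^sub>R mat 1 = (\<Sum>i\<in>UNIV. s j *\<^sub>R mat_unit i i)"
    by (simp add: sum_mat_unit_diagonal flip: scaleR_sum_right)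
  also have "\<dots> = (\<Sum>i\<in>UNIV. cadj (mat_unit j i) ** diag_mat s ** mat_unit j i)"
    by (simp add: cadj_mat_unit mat_unit_mult_diag_mat_mult)
  finally have "N (s j *\<^sub>R mat 1) \<le> Max (range (\<lambda>i. N (diag_mat s)))"
    using M_norm_UNIV[OF M units, of "\<lambda>_. diag_mat s"] by simp
  then show "Max (range s) * N (mat 1) \<le> N (diag_mat s)"
    using j s[rule_format, of j] by (simp add: matrix_norm_scaleR[OF N])
qed

lemma L_norm_mat_unit_le:
  assumes N: "is_matrix_norm N" and L: "L_norm N"
  shows "N (mat_unit i i) \<le> N (mat_unit j j)"
proof -
  have "(\<Sum>r\<in>UNIV. cadj (mat_unit i r) ** mat_unit i r) = mat 1"
    by (simp add: cadj_mat_unit mat_unit_mult sum_mat_unit_diagonal)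
  then have "(\<Sum>r\<in>UNIV. N (mat_unit i r ** mat_unit j j ** cadj (mat_unit i r))) \<le> N (mat_unit j j)"
    by (rule L_norm_UNIV[OF L])
  moreover have "N (mat_unit i r ** mat_unit j j ** cadj (mat_unit i r)) =
      (if r = j then N (mat_unit i i) else 0)" for r
    using N by (simp add: cadj_mat_unit mat_unit_mult is_matrix_norm_def)
  ultimately show ?thesis by simp
qed

lemma L_norm_diag_mat:
  fixes s :: "'n::finite \<Rightarrow> real"
  assumes N: "is_matrix_norm N" and L: "L_norm N" and s: "\<forall>i. s i \<ge> 0"
  shows "N (diag_mat s) = (\<Sum>i\<in>UNIV. s i) * N (mat_unit j j)"
proof -
  have terms: "N (s i *\<^sub>R mat_unit i i) = s i * N (mat_unit j j)" for i
    using s L_norm_mat_unit_le[OF N L, of i j] L_norm_mat_unit_le[OF N L, of j i]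
    by (simp add: matrix_norm_scaleR[OF N])
  have "N (diag_mat s) \<le> (\<Sum>i\<in>UNIV. N (s i *\<^sub>R mat_unit i i))"
    unfolding diag_mat_eq_sum_mat_unit[of s] by (rule matrix_norm_sum_le[OF N])
  moreover have "(\<Sum>i\<in>UNIV. cadj (mat_unit i i) ** mat_unit i i) = mat 1"
    by (simp add: cadj_mat_unit mat_unit_mult sum_mat_unit_diagonal)
  then have "(\<Sum>i\<in>UNIV. N (mat_unit i i ** diag_mat s ** cadj (mat_unit i i))) \<le> N (diag_mat s)"
    by (rule L_norm_UNIV[OF L])
  moreover have "mat_unit i i ** diag_mat s ** cadj (mat_unit i i) = s i *\<^sub>R mat_unit i i" for i
    by (simp add: cadj_mat_unit mat_unit_mult_diag_mat_mult)
  ultimately show ?thesis by (simp add: terms sum_distrib_right)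
qed

lemma mat_1_neq_0: "(mat 1 :: complex^'n^'n) \<noteq> 0"
  by (simp add: mat_def vec_eq_iff)

lemma M_norm_eq_op_norm:
  fixes N :: "complex^'n^'n \<Rightarrow> real"
  assumes N: "is_matrix_norm N" and ui: "unitarily_invariant N" and M: "M_norm N"
  shows "\<exists>\<alpha>>0. \<forall>A. N A = \<alpha> * op_norm A"
proof (intro exI conjI allI)
  show "N (mat 1) > 0" by (rule matrix_norm_pos[OF N mat_1_neq_0])
  fix A :: "complex^'n^'n"
  obtain U V s where U: "unitary U" and V: "unitary V" and s: "\<forall>i. s i \<ge> 0"
    and A: "A = U ** diag_mat s ** cadj V"
    by (rule svd)
  have "N A = Max (range s) * N (mat 1)"
    unfolding A unitarily_invariant_svd[OF ui U V] by (rule M_norm_diag_mat[OF N M s])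
  also have "\<dots> = N (mat 1) * op_norm A"
    unfolding A op_norm_svd[OF U V s] by (rule mult.commute)
  finally show "N A = N (mat 1) * op_norm A" .
qed

lemma L_norm_eq_trace_norm:
  fixes N :: "complex^'n^'n \<Rightarrow> real"
  assumes N: "is_matrix_norm N" and ui: "unitarily_invariant N" and L: "L_norm N"
  shows "\<exists>\<alpha>>0. \<forall>A. N A = \<alpha> * trace_norm A"
proof -
  fix j :: 'n
  show ?thesis
  proof (intro exI[of _ "N (mat_unit j j)"] conjI allI)
    show "N (mat_unit j j) > 0" by (rule matrix_norm_pos[OF N mat_unit_neq_0])
    fix A :: "complex^'n^'n"
    obtain U V s where U: "unitary U" and V: "unitary V" and s: "\<forall>i. s i \<ge> 0"
      and A: "A = U ** diag_mat s ** cadj V"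
      by (rule svd)
    have "N A = (\<Sum>i\<in>UNIV. s i) * N (mat_unit j j)"
      unfolding A unitarily_invariant_svd[OF ui U V] by (rule L_norm_diag_mat[OF N L s])
    also have "\<dots> = N (mat_unit j j) * trace_norm A"
      unfolding A trace_norm_svd[OF U V s] by (rule mult.commute)
    finally show "N A = N (mat_unit j j) * trace_norm A" .
  qed
qed

theorem corollary2p10:
  fixes N :: "complex^'n^'n \<Rightarrow> real"
  assumes "is_matrix_norm N" and "unitarily_invariant N"
  shows "(M_norm N \<longrightarrow> (\<exists>\<alpha>>0. \<forall>A. N A = \<alpha> * op_norm A)) \<and>
         (L_norm N \<longrightarrow> (\<exists>\<alpha>>0. \<forall>A. N A = \<alpha> * trace_norm A))"
  using M_norm_eq_op_norm[OF assms] L_norm_eq_trace_norm[OF assms] by blast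

end
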